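(* Let $P=\{x\in\mathbb{R}^n: Ax\ge b\}$ be full-dimensional and pointed, $\mathcal{I}\subseteq\{1,\dots,n\}$, $P_I=\{x\in P:x_j\in\mathbb{Z}\ \forall j\in\mathcal{I}\}$, and $c\in\mathbb{R}^n$. Let $\mathcal{T}$ be finite and $P^t=\{x\in P:D^tx\ge D^t_0\}$, $t\in\mathcal{T}$, the terms of a disjunction with $P_I\subseteq\operatorname{cl}\operatorname{conv}(\bigcup_tP^t)$. For each $t\in\mathcal{T}$, let $\mathcal{P}^t$ consist of an optimal (vertex) solution $p^t$ to $\min\{c^\top x:x\in P^t\}$ together with one point on each of the edges of $P^t$ emanating from $p^t$. Let $\mathcal{P}=\bigcup_t\mathcal{P}^t$ and $\mathcal{R}=\emptyset$. Then any $(\alpha,\beta)$ satisfying $\alpha^\top p\ge\beta$ for all $p\in\mathcal{P}$ and additionally $\alpha^\top p^t=\beta$ for all $t\in\mathcal{T}$ yields an inequality $\alpha^\top x\ge\beta$ that is valid for $P_I$. *)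

theory Defs
  imports "HOL-Analysis.Analysis"
begin

definition polyhedron_of :: "real^'n^'m \<Rightarrow> real^'m \<Rightarrow> (real^'n) set" where
  "polyhedron_of A b = {x. \<forall>i. (A *v x) $ i \<ge> b $ i}"

definition pointed :: "(real^'n) set \<Rightarrow> bool" where
  "pointed S \<longleftrightarrow> \<not> (\<exists>x d. d \<noteq> 0 \<and> (\<forall>l::real. x + l *\<^sub>R d \<in> S))"

definition mixed_int_points :: "(real^'n) set \<Rightarrow> 'n set \<Rightarrow> (real^'n) set" where
  "mixed_int_points P I = {x \<in> P. \<forall>j\<in>I. x $ j \<in> \<int>}"

text \<open>A disjunctive term {x in P. D x \<ge> D0}, the rows of (D, D0) given as a finite set of pairs.\<close>
definition term_poly :: "(real^'n) set \<Rightarrow> ((real^'n) \<times> real) set \<Rightarrow> (real^'n) set" where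
  "term_poly P D = {x \<in> P. \<forall>(d, d0) \<in> D. d \<bullet> x \<ge> d0}"

definition edges_at :: "(real^'n) set \<Rightarrow> real^'n \<Rightarrow> (real^'n) set set" where
  "edges_at S p = {e. e face_of S \<and> aff_dim e = 1 \<and> p \<in> e}"

end

theory Submission
  imports Defs
begin

(* Only two properties of the terms are used: p t is a vertex of the polyhedron P^t, and the
   inequality holds at one point other than p t on every edge of P^t at p t, with equality at p t.
   Near a vertex p, a polyhedron coincides with the cone cut out by its constraints active at p,
   and has the same edges at p as that cone. A pointed polyhedral cone with apex p lies in the
   halfspace alpha x >= alpha p as soon as one point of every edge at p does: otherwise pick y
   in the cone below the hyperplane; if the cone is one-dimensional it is itself an edge, and its
   edge point lies on the ray from p through y, hence below as well; otherwise move y parallel to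
   the hyperplane, inside a plane through p and y, until it meets a facet, which is a cone of
   smaller dimension with the same apex, and use induction. Hence alpha x >= beta on every P^t,
   so on the closed convex hull of their union, which contains P_I. *)

definition hpoly :: "('a::euclidean_space \<times> real) set \<Rightarrow> 'a set" where
  "hpoly H = {x. \<forall>(a, b)\<in>H. a \<bullet> x \<ge> b}"

definition active_constraints :: "('a::euclidean_space \<times> real) set \<Rightarrow> 'a \<Rightarrow> ('a \<times> real) set" where
  "active_constraints H p = {h \<in> H. fst h \<bullet> p = snd h}"

lemma convex_hpoly: "convex (hpoly H)"
proof -
  have "hpoly H = (\<Inter>h\<in>H. {x. fst h \<bullet> x \<ge> snd h})"
    by (force simp: hpoly_def)
  then show ?thesis
    by (simp add: convex_INT convex_halfspace_ge)
qed

lemma hpoly_antimono: "G \<subseteq> H \<Longrightarrow> hpoly H \<subseteq> hpoly G"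
  by (auto simp: hpoly_def)

lemma hpoly_insert_reversed:
  assumes "(a, b) \<in> H"
  shows "hpoly (insert (-a, -b) H) = hpoly H \<inter> {x. a \<bullet> x = b}"
  using assms by (auto simp: hpoly_def)

lemma face_of_hpoly_insert_reversed:
  assumes "(a, b) \<in> H"
  shows "hpoly (insert (-a, -b) H) face_of hpoly H"
  unfolding hpoly_insert_reversed[OF assms]
  by (rule face_of_Int_supporting_hyperplane_ge[OF convex_hpoly])
    (use assms in \<open>auto simp: hpoly_def\<close>)

lemma extreme_point_of_hpoly_nonorthogonal:
  assumes "p extreme_point_of hpoly H" and "d \<noteq> 0"
  shows "\<exists>(a, b)\<in>H. a \<bullet> d \<noteq> 0"
proof (rule ccontr)
  assume "\<not> ?thesis"
  then have orth: "a \<bullet> d = 0" if "(a, b) \<in> H" for a b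
    using that by auto
  have "p \<in> hpoly H"
    using assms(1) by (simp add: extreme_point_of_def)
  then have "p - d \<in> hpoly H" "p + d \<in> hpoly H"
    using orth by (auto simp: hpoly_def inner_diff_right inner_add_right)
  moreover have "p \<in> open_segment (p - d) (p + d)"
  proof -
    have "d + d = 2 *\<^sub>R d"
      by (simp add: scaleR_2)
    with assms(2) have "p - d \<noteq> p + d"
      by (simp add: algebra_simps)
    moreover have "midpoint (p - d) (p + d) = p"
      by (simp add: midpoint_eq_iff algebra_simps)
    ultimately show ?thesis
      using midpoint_in_open_segment[of "p - d" "p + d"] by simp
  qed
  ultimately show False
    using assms(1) unfolding extreme_point_of_def by blast
qed

lemma hpoly_ray_exit:
  assumes "finite H" and "y \<in> hpoly H" and "(a, b) \<in> H" and "a \<bullet> e < 0"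
  obtains s a0 b0 where "s \<ge> 0" and "(a0, b0) \<in> H" and "a0 \<bullet> e < 0"
    and "y + s *\<^sub>R e \<in> hpoly H" and "a0 \<bullet> (y + s *\<^sub>R e) = b0"
proof -
  define G where "G = {h \<in> H. fst h \<bullet> e < 0}"
  \<comment> \<open>the step along e at which constraint h becomes tight\<close>
  define ratio where "ratio h = (fst h \<bullet> y - snd h) / - (fst h \<bullet> e)" for h
  have "finite G" "G \<noteq> {}"
    using assms by (auto simp: G_def)
  then obtain h0 where h0: "h0 \<in> G" and min: "\<And>h. h \<in> G \<Longrightarrow> ratio h0 \<le> ratio h"
    using arg_min_if_finite[of G ratio] by (metis not_le)
  obtain a0 b0 where [simp]: "h0 = (a0, b0)"
    by fastforce
  have y: "a \<bullet> y \<ge> b" if "(a, b) \<in> H" for a b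
    using assms(2) that by (auto simp: hpoly_def)
  have a0: "(a0, b0) \<in> H" "a0 \<bullet> e < 0"
    using h0 by (auto simp: G_def)
  define s where "s = ratio h0"
  have "s * (a0 \<bullet> e) = b0 - a0 \<bullet> y"
    using a0(2) by (simp add: s_def ratio_def)
  then have hit: "a0 \<bullet> (y + s *\<^sub>R e) = b0"
    by (simp add: inner_add_right)
  have "s \<ge> 0"
    using a0 y[OF a0(1)] by (simp add: s_def ratio_def divide_nonneg_neg)
  moreover have "y + s *\<^sub>R e \<in> hpoly H"
    unfolding hpoly_def
  proof clarify
    fix a b assume ab: "(a, b) \<in> H"
    show "a \<bullet> (y + s *\<^sub>R e) \<ge> b"
    proof (cases "a \<bullet> e < 0")
      case True
      then have "s \<le> (a \<bullet> y - b) / - (a \<bullet> e)"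
        using min[of "(a, b)"] ab by (simp add: s_def ratio_def G_def)
      then have "s * - (a \<bullet> e) \<le> (a \<bullet> y - b) / - (a \<bullet> e) * - (a \<bullet> e)"
        by (rule mult_right_mono) (use True in simp)
      also have "\<dots> = a \<bullet> y - b"
        using True by simp
      finally show ?thesis
        by (simp add: algebra_simps)
    next
      case False
      with \<open>s \<ge> 0\<close> have "s * (a \<bullet> e) \<ge> 0"
        by simp
      with y[OF ab] show ?thesis
        unfolding inner_add_right inner_scaleR_right by linarith
    qed
  qed
  ultimately show ?thesis
    using a0 hit by (intro that)
qed

lemma extreme_point_collinear_ray:
  assumes "p extreme_point_of S" and "y \<in> S" and "z \<in> S" and "z \<in> affine hull {p, y}"
  obtains v where "v \<ge> 0" and "z = p + v *\<^sub>R (y - p)"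
proof -
  obtain v where z: "z = p + v *\<^sub>R (y - p)"
    using assms(4) by (auto simp: affine_hull_2_alt)
  show ?thesis
  proof (cases "v \<ge> 0 \<or> y = p")
    case True
    with that z show ?thesis by auto
  next
    case False
    then have v: "v < 0" and "y \<noteq> p" by auto
    define w where "w = - v / (1 - v)"
    have "(1 - v) * (1 - w) = 1" "(1 - v) * w = - v"
      using v by (auto simp: w_def field_simps)
    then have "(1 - v) *\<^sub>R ((1 - w) *\<^sub>R z + w *\<^sub>R y) = (1 - v) *\<^sub>R p"
      by (simp add: z algebra_simps)
    then have "(1 - w) *\<^sub>R z + w *\<^sub>R y = p"
      using v by simp
    moreover have "0 < w" "w < 1" "z \<noteq> y"
      using v \<open>y \<noteq> p\<close> by (auto simp: w_def field_simps z)
    ultimately have "p \<in> open_segment z y"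
      unfolding in_segment by blast
    with assms show ?thesis
      by (auto simp: extreme_point_of_def)
  qed
qed

lemma hpoly_apex_descent:
  assumes fin: "finite H" and apex: "\<forall>(a, b)\<in>H. a \<bullet> p = b"
    and ext: "p extreme_point_of hpoly H"
    and y: "y \<in> hpoly H" "\<alpha> \<bullet> y < \<alpha> \<bullet> p"
    and w: "w \<in> hpoly H" "w \<notin> affine hull {p, y}"
  obtains a0 b0 z where "(a0, b0) \<in> H" and "\<not> hpoly H \<subseteq> {x. a0 \<bullet> x = b0}"
    and "z \<in> hpoly H" and "a0 \<bullet> z = b0" and "\<alpha> \<bullet> z < \<alpha> \<bullet> p"
proof -
  define c1 where "c1 = \<alpha> \<bullet> (w - p)"
  define c2 where "c2 = \<alpha> \<bullet> (y - p)"
  have "c2 < 0"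
    using y(2) by (simp add: c2_def inner_diff_right)
  \<comment> \<open>d lies in the plane through p, y, w and is parallel to the hyperplane through p\<close>
  define d where "d = c1 *\<^sub>R (y - p) - c2 *\<^sub>R (w - p)"
  have \<alpha>d: "\<alpha> \<bullet> d = 0"
    by (simp add: d_def c1_def c2_def algebra_simps)
  have "d \<noteq> 0"
  proof
    assume "d = 0"
    then have "c2 *\<^sub>R (w - p) = c1 *\<^sub>R (y - p)"
      by (simp add: d_def)
    then have "(1 / c2) *\<^sub>R (c2 *\<^sub>R (w - p)) = (c1 / c2) *\<^sub>R (y - p)"
      by simp
    then have "w = p + (c1 / c2) *\<^sub>R (y - p)"
      using \<open>c2 < 0\<close> by (simp add: algebra_simps)
    with w(2) show False
      by (auto simp: affine_hull_2_alt)
  qed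
  then obtain a b where ab: "(a, b) \<in> H" "a \<bullet> d \<noteq> 0"
    using extreme_point_of_hpoly_nonorthogonal[OF ext] by blast
  define e where "e = (if a \<bullet> d < 0 then d else - d)"
  have "a \<bullet> e < 0" "\<alpha> \<bullet> e = 0"
    using ab(2) \<alpha>d by (auto simp: e_def)
  then obtain s a0 b0 where s: "(a0, b0) \<in> H" "a0 \<bullet> e < 0"
    "y + s *\<^sub>R e \<in> hpoly H" "a0 \<bullet> (y + s *\<^sub>R e) = b0"
    using hpoly_ray_exit[OF fin y(1) ab(1)] by blast
  have proper: "\<not> hpoly H \<subseteq> {x. a0 \<bullet> x = b0}"
  proof
    assume "hpoly H \<subseteq> {x. a0 \<bullet> x = b0}"
    then have "a0 \<bullet> y = b0" "a0 \<bullet> w = b0"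
      using y(1) w(1) by auto
    moreover have "a0 \<bullet> p = b0"
      using apex s(1) by auto
    ultimately have "a0 \<bullet> d = 0"
      by (simp add: d_def inner_diff_right)
    then have "a0 \<bullet> e = 0"
      by (simp add: e_def)
    with s(2) show False
      by simp
  qed
  have "\<alpha> \<bullet> (y + s *\<^sub>R e) < \<alpha> \<bullet> p"
    using y(2) \<open>\<alpha> \<bullet> e = 0\<close> by (simp add: inner_add_right)
  then show ?thesis
    by (rule that[OF s(1) proper s(3,4)])
qed

lemma extreme_point_collinear_below:
  assumes "p extreme_point_of S" and "S \<subseteq> affine hull {p, y}" and "y \<in> S"
    and "\<alpha> \<bullet> y < \<alpha> \<bullet> p" and "z \<in> S" and "z \<noteq> p"
  shows "\<alpha> \<bullet> z < \<alpha> \<bullet> p"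
proof -
  obtain v where v: "v \<ge> 0" "z = p + v *\<^sub>R (y - p)"
    using extreme_point_collinear_ray assms(1,2,3,5) by blast
  with assms(6) have "v > 0"
    by auto
  then show ?thesis
    using assms(4) v(2) by (simp add: inner_add_right inner_diff_right mult_pos_neg)
qed

lemma aff_dim_hpoly_insert_reversed_less:
  assumes "(a, b) \<in> H" and "\<not> hpoly H \<subseteq> {x. a \<bullet> x = b}" and "hpoly (insert (-a, -b) H) \<noteq> {}"
  shows "nat (aff_dim (hpoly (insert (-a, -b) H))) < nat (aff_dim (hpoly H))"
proof -
  have "hpoly (insert (-a, -b) H) \<noteq> hpoly H"
    using assms(2) unfolding hpoly_insert_reversed[OF assms(1)] by blast
  then have "aff_dim (hpoly (insert (-a, -b) H)) < aff_dim (hpoly H)"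
    by (rule face_of_aff_dim_lt[OF convex_hpoly face_of_hpoly_insert_reversed[OF assms(1)]])
  moreover have "aff_dim (hpoly (insert (-a, -b) H)) \<ge> 0"
    using assms(3) by (metis aff_dim_negative_iff not_le)
  ultimately show ?thesis
    by simp
qed

lemma hpoly_apex_halfspace_ge:
  assumes "finite H" and "\<forall>(a, b)\<in>H. a \<bullet> p = b" and "p extreme_point_of hpoly H"
    and "\<And>E. E face_of hpoly H \<Longrightarrow> aff_dim E = 1 \<Longrightarrow> p \<in> E \<Longrightarrow> \<exists>z\<in>E. z \<noteq> p \<and> \<alpha> \<bullet> z \<ge> \<alpha> \<bullet> p"
  shows "hpoly H \<subseteq> {x. \<alpha> \<bullet> x \<ge> \<alpha> \<bullet> p}"
proof -
  define n where "n = nat (aff_dim (hpoly H))"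
  from n_def assms show ?thesis
  proof (induction n arbitrary: H rule: less_induct)
    case (less n H)
    note dim = less.prems(1) and fin = less.prems(2) and apex = less.prems(3)
      and ext = less.prems(4) and edges = less.prems(5)
    let ?K = "hpoly H"
    have pK: "p \<in> ?K"
      using ext by (simp add: extreme_point_of_def)
    show ?case
    proof (rule subsetI, rule ccontr)
      fix y assume "y \<in> ?K" "y \<notin> {x. \<alpha> \<bullet> x \<ge> \<alpha> \<bullet> p}"
      then have y: "y \<in> ?K" "\<alpha> \<bullet> y < \<alpha> \<bullet> p"
        by auto
      consider "?K \<subseteq> affine hull {p, y}" | w where "w \<in> ?K" "w \<notin> affine hull {p, y}"
        by blast
      then show False
      proof cases
        case 1
        have "y \<noteq> p"
          using y(2) by auto
        have "aff_dim ?K \<le> aff_dim (affine hull {p, y})"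
          using 1 by (rule aff_dim_subset)
        moreover have "aff_dim {p, y} \<le> aff_dim ?K"
          using pK y(1) by (intro aff_dim_subset) auto
        ultimately have "aff_dim ?K = 1"
          using \<open>y \<noteq> p\<close> by simp
        then obtain z where "z \<in> ?K" "z \<noteq> p" "\<alpha> \<bullet> z \<ge> \<alpha> \<bullet> p"
          using edges[OF face_of_refl[OF convex_hpoly] _ pK] by blast
        with extreme_point_collinear_below[OF ext 1 y] show False
          by fastforce
      next
        case 2
        obtain a0 b0 z where a0: "(a0, b0) \<in> H" "\<not> ?K \<subseteq> {x. a0 \<bullet> x = b0}"
          and z: "z \<in> ?K" "a0 \<bullet> z = b0" "\<alpha> \<bullet> z < \<alpha> \<bullet> p"
          by (rule hpoly_apex_descent[OF fin apex ext y 2])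
        let ?F = "hpoly (insert (-a0, -b0) H)"
        have face: "?F face_of ?K"
          using a0(1) by (rule face_of_hpoly_insert_reversed)
        have pF: "p \<in> ?F"
          using hpoly_insert_reversed[OF a0(1)] pK a0(1) apex by auto
        then have "nat (aff_dim ?F) < n"
          using aff_dim_hpoly_insert_reversed_less[OF a0] dim by blast
        then have "?F \<subseteq> {x. \<alpha> \<bullet> x \<ge> \<alpha> \<bullet> p}"
        proof (rule less.IH[OF _ refl])
          show "finite (insert (-a0, -b0) H)"
            using fin by simp
          show "\<forall>(a, b)\<in>insert (-a0, -b0) H. a \<bullet> p = b"
            using apex a0(1) by auto
          show "p extreme_point_of ?F"
            using extreme_point_of_face[OF face] ext pF by simp
          show "\<exists>z\<in>E. z \<noteq> p \<and> \<alpha> \<bullet> z \<ge> \<alpha> \<bullet> p"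
            if "E face_of ?F" "aff_dim E = 1" "p \<in> E" for E
            by (rule edges[OF face_of_trans[OF that(1) face] that(2,3)])
        qed
        moreover have "z \<in> ?F"
          using z(1,2) hpoly_insert_reversed[OF a0(1)] by simp
        ultimately show False
          using z(3) by auto
      qed
    qed
  qed
qed

lemma open_segment_homothety:
  fixes p :: "'a::real_vector"
  assumes "p \<in> open_segment a b" and "s \<noteq> 0"
  shows "p \<in> open_segment (p + s *\<^sub>R (a - p)) (p + s *\<^sub>R (b - p))"
proof -
  obtain u where u: "0 < u" "u < 1" "p = (1 - u) *\<^sub>R a + u *\<^sub>R b" "a \<noteq> b"
    using assms(1) by (auto simp: in_segment)
  have "(1 - u) *\<^sub>R (p + s *\<^sub>R (a - p)) + u *\<^sub>R (p + s *\<^sub>R (b - p))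
      = p + s *\<^sub>R (((1 - u) *\<^sub>R a + u *\<^sub>R b) - p)"
    by (simp add: algebra_simps)
  also have "\<dots> = p"
    using u(3) by simp
  finally have "p = (1 - u) *\<^sub>R (p + s *\<^sub>R (a - p)) + u *\<^sub>R (p + s *\<^sub>R (b - p))" ..
  moreover have "p + s *\<^sub>R (a - p) \<noteq> p + s *\<^sub>R (b - p)"
    using assms(2) u(4) by simp
  ultimately show ?thesis
    using u(1,2) unfolding in_segment by blast
qed

lemma eventually_in_hpoly_towards_active:
  assumes "finite H" and "p \<in> hpoly H" and "y \<in> hpoly (active_constraints H p)"
  shows "\<forall>\<^sub>F s in at_right 0. p + s *\<^sub>R (y - p) \<in> hpoly H"
proof -
  have each: "\<forall>\<^sub>F s in at_right 0. a \<bullet> (p + s *\<^sub>R (y - p)) \<ge> b" if ab: "(a, b) \<in> H" for a b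
  proof (cases "a \<bullet> p = b")
    case True
    then have "a \<bullet> y \<ge> b"
      using ab assms(3) by (auto simp: hpoly_def active_constraints_def)
    with True have "a \<bullet> (p + s *\<^sub>R (y - p)) \<ge> b" if "s > 0" for s :: real
      using that by (simp add: inner_add_right inner_diff_right)
    then show ?thesis
      using eventually_at_right_less by (rule eventually_mono[rotated])
  next
    case False
    have "((\<lambda>s::real. a \<bullet> (p + s *\<^sub>R (y - p))) \<longlongrightarrow> a \<bullet> (p + 0 *\<^sub>R (y - p))) (at_right 0)"
      by (intro tendsto_intros)
    moreover have "b < a \<bullet> (p + 0 *\<^sub>R (y - p))"
      using False ab assms(2) by (force simp: hpoly_def)
    ultimately have "\<forall>\<^sub>F s in at_right 0. b < a \<bullet> (p + s *\<^sub>R (y - p))"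
      by (rule order_tendstoD(1))
    then show ?thesis
      by (rule eventually_mono) (rule less_imp_le)
  qed
  have "\<forall>\<^sub>F s in at_right 0. \<forall>h\<in>H. fst h \<bullet> (p + s *\<^sub>R (y - p)) \<ge> snd h"
    using each by (intro eventually_ball_finite[OF assms(1)]) auto
  then show ?thesis
    by (rule eventually_mono) (auto simp: hpoly_def)
qed

lemma extreme_point_of_active_cone:
  assumes "finite H" and "p extreme_point_of hpoly H"
  shows "p extreme_point_of hpoly (active_constraints H p)"
  unfolding extreme_point_of_def
proof (intro conjI ballI notI)
  have pS: "p \<in> hpoly H"
    using assms(2) by (simp add: extreme_point_of_def)
  then show "p \<in> hpoly (active_constraints H p)"
    by (auto simp: hpoly_def active_constraints_def)
  fix y1 y2 assume y: "y1 \<in> hpoly (active_constraints H p)" "y2 \<in> hpoly (active_constraints H p)"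
    and p: "p \<in> open_segment y1 y2"
  have "\<forall>\<^sub>F s in at_right 0. 0 < s \<and> p + s *\<^sub>R (y1 - p) \<in> hpoly H \<and> p + s *\<^sub>R (y2 - p) \<in> hpoly H"
    using eventually_at_right_less eventually_in_hpoly_towards_active[OF assms(1) pS y(1)]
      eventually_in_hpoly_towards_active[OF assms(1) pS y(2)]
    by (intro eventually_conj)
  then obtain s where "0 < s" "p + s *\<^sub>R (y1 - p) \<in> hpoly H" "p + s *\<^sub>R (y2 - p) \<in> hpoly H"
    using eventually_happens'[OF trivial_limit_at_right_real] by blast
  moreover have "p \<in> open_segment (p + s *\<^sub>R (y1 - p)) (p + s *\<^sub>R (y2 - p))"
    using p \<open>0 < s\<close> by (simp add: open_segment_homothety)
  ultimately show False
    using assms(2) unfolding extreme_point_of_def by blast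
qed

lemma edge_of_hpoly_from_active_cone:
  assumes "finite H" and "p \<in> hpoly H" and E: "E face_of hpoly (active_constraints H p)"
    and "aff_dim E = 1" and "p \<in> E"
  shows "E \<inter> hpoly H face_of hpoly H" and "aff_dim (E \<inter> hpoly H) = 1"
proof -
  have "hpoly H \<subseteq> hpoly (active_constraints H p)"
    by (rule hpoly_antimono) (auto simp: active_constraints_def)
  then show "E \<inter> hpoly H face_of hpoly H"
    using face_of_Int_Int[OF E face_of_refl[OF convex_hpoly[of H]]] by (simp add: Int_absorb1)
  have "E \<noteq> {p}"
    using assms(4) by auto
  then obtain z0 where z0: "z0 \<in> E" "z0 \<noteq> p"
    using assms(5) by blast
  have "z0 \<in> hpoly (active_constraints H p)"
    using z0(1) E face_of_imp_subset by blast
  moreover have "\<forall>\<^sub>F s in at_right 0. s < (1::real)"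
    by (rule eventually_at_rightI[where b = 1]) auto
  ultimately have "\<forall>\<^sub>F s in at_right 0. 0 < s \<and> s < 1 \<and> p + s *\<^sub>R (z0 - p) \<in> hpoly H"
    using eventually_at_right_less eventually_in_hpoly_towards_active[OF assms(1,2)]
    by (intro eventually_conj) auto
  then obtain s where s: "0 < s" "s < 1" "p + s *\<^sub>R (z0 - p) \<in> hpoly H"
    using eventually_happens'[OF trivial_limit_at_right_real] by blast
  have "p + s *\<^sub>R (z0 - p) = (1 - s) *\<^sub>R p + s *\<^sub>R z0"
    by (simp add: algebra_simps)
  then have "p + s *\<^sub>R (z0 - p) \<in> E"
    using convexD[OF face_of_imp_convex[OF E] assms(5) z0(1)] s(1,2) by simp
  moreover have "p + s *\<^sub>R (z0 - p) \<noteq> p"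
    using s(1) z0(2) by simp
  ultimately have "aff_dim {p, p + s *\<^sub>R (z0 - p)} \<le> aff_dim (E \<inter> hpoly H)"
    using assms(2,5) s(3) by (intro aff_dim_subset) auto
  moreover have "aff_dim (E \<inter> hpoly H) \<le> aff_dim E"
    by (intro aff_dim_subset) auto
  ultimately show "aff_dim (E \<inter> hpoly H) = 1"
    using assms(4) \<open>p + s *\<^sub>R (z0 - p) \<noteq> p\<close> by simp
qed

lemma hpoly_vertex_halfspace_ge:
  assumes fin: "finite H" and ext: "p extreme_point_of hpoly H"
    and edges: "\<And>E. E face_of hpoly H \<Longrightarrow> aff_dim E = 1 \<Longrightarrow> p \<in> E \<Longrightarrow> \<exists>z\<in>E. z \<noteq> p \<and> \<alpha> \<bullet> z \<ge> \<alpha> \<bullet> p"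
  shows "hpoly H \<subseteq> {x. \<alpha> \<bullet> x \<ge> \<alpha> \<bullet> p}"
proof -
  have pS: "p \<in> hpoly H"
    using ext by (simp add: extreme_point_of_def)
  have "hpoly (active_constraints H p) \<subseteq> {x. \<alpha> \<bullet> x \<ge> \<alpha> \<bullet> p}"
  proof (rule hpoly_apex_halfspace_ge)
    show "finite (active_constraints H p)"
      using fin by (simp add: active_constraints_def)
    show "\<forall>(a, b)\<in>active_constraints H p. a \<bullet> p = b"
      by (auto simp: active_constraints_def)
    show "p extreme_point_of hpoly (active_constraints H p)"
      using fin ext by (rule extreme_point_of_active_cone)
    show "\<exists>z\<in>E. z \<noteq> p \<and> \<alpha> \<bullet> z \<ge> \<alpha> \<bullet> p"
      if "E face_of hpoly (active_constraints H p)" "aff_dim E = 1" "p \<in> E" for E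
      using edges[OF edge_of_hpoly_from_active_cone[OF fin pS that]] that(3) pS by blast
  qed
  moreover have "hpoly H \<subseteq> hpoly (active_constraints H p)"
    by (rule hpoly_antimono) (auto simp: active_constraints_def)
  ultimately show ?thesis
    by blast
qed

lemma term_poly_polyhedron_of:
  "term_poly (polyhedron_of A b) D = hpoly (range (\<lambda>i. (A $ i, b $ i)) \<union> D)"
  by (auto simp: term_poly_def polyhedron_of_def hpoly_def matrix_vector_mul_component)

theorem theorem4:
  fixes A :: "real^'n^'m" and b :: "real^'m" and I :: "'n set" and c :: "real^'n"
    and T :: "'t set" and D :: "'t \<Rightarrow> ((real^'n) \<times> real) set"
    and p :: "'t \<Rightarrow> real^'n" and q :: "'t \<Rightarrow> (real^'n) set \<Rightarrow> real^'n"
    and \<alpha> :: "real^'n" and \<beta> :: real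
  assumes full_dim: "aff_dim (polyhedron_of A b) = int CARD('n)"
    and pointed: "pointed (polyhedron_of A b)"
    and fin_T: "finite T"
    and fin_D: "\<forall>t\<in>T. finite (D t)"
    and disj: "mixed_int_points (polyhedron_of A b) I
               \<subseteq> closure (convex hull (\<Union>t\<in>T. term_poly (polyhedron_of A b) (D t)))"
    and opt: "\<forall>t\<in>T. term_poly (polyhedron_of A b) (D t) \<noteq> {} \<longrightarrow>
               p t extreme_point_of (term_poly (polyhedron_of A b) (D t)) \<and>
               (\<forall>x\<in>term_poly (polyhedron_of A b) (D t). c \<bullet> p t \<le> c \<bullet> x)"
    and edge_pts: "\<forall>t\<in>T. term_poly (polyhedron_of A b) (D t) \<noteq> {} \<longrightarrow>
               (\<forall>e\<in>edges_at (term_poly (polyhedron_of A b) (D t)) (p t). q t e \<in> e \<and> q t e \<noteq> p t)"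
    and valid_pts: "\<forall>t\<in>T. term_poly (polyhedron_of A b) (D t) \<noteq> {} \<longrightarrow>
               (\<forall>x \<in> insert (p t) (q t ` edges_at (term_poly (polyhedron_of A b) (D t)) (p t)).
                  \<alpha> \<bullet> x \<ge> \<beta>)"
    and tight: "\<forall>t\<in>T. term_poly (polyhedron_of A b) (D t) \<noteq> {} \<longrightarrow> \<alpha> \<bullet> p t = \<beta>"
  shows "\<forall>x \<in> mixed_int_points (polyhedron_of A b) I. \<alpha> \<bullet> x \<ge> \<beta>"
proof -
  let ?P = "polyhedron_of A b"
  have "term_poly ?P (D t) \<subseteq> {x. \<alpha> \<bullet> x \<ge> \<beta>}" if t: "t \<in> T" for t
  proof (cases "term_poly ?P (D t) = {}")
    case False
    let ?H = "range (\<lambda>i. (A $ i, b $ i)) \<union> D t"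
    have "hpoly ?H \<subseteq> {x. \<alpha> \<bullet> x \<ge> \<alpha> \<bullet> p t}"
    proof (rule hpoly_vertex_halfspace_ge)
      show "finite ?H"
        using fin_D t by simp
      show "p t extreme_point_of hpoly ?H"
        using opt t False by (simp add: term_poly_polyhedron_of)
      show "\<exists>z\<in>E. z \<noteq> p t \<and> \<alpha> \<bullet> z \<ge> \<alpha> \<bullet> p t"
        if "E face_of hpoly ?H" "aff_dim E = 1" "p t \<in> E" for E
      proof -
        have "E \<in> edges_at (term_poly ?P (D t)) (p t)"
          using that by (simp add: edges_at_def term_poly_polyhedron_of)
        then show ?thesis
          using edge_pts valid_pts tight t False by fastforce
      qed
    qed
    then show ?thesis
      using tight t False by (simp add: term_poly_polyhedron_of)
  qed simp
  then have "closure (convex hull (\<Union>t\<in>T. term_poly ?P (D t))) \<subseteq> {x. \<alpha> \<bullet> x \<ge> \<beta>}"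
    by (intro closure_minimal hull_minimal) (auto simp: convex_halfspace_ge closed_halfspace_ge)
  with disj show ?thesis
    by blast
qed

end
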